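(* Let $\gamma>0$, $\tau>3$, $\alpha\in D_{\gamma,\tau}$, and let $p_n/q_n$ be the convergents of $\alpha$; for even $n$ let $I_n:=\left(\frac{p_n}{q_n},\frac{p_{n+2}}{q_{n+2}}\right)$. There exists $N_1\in\mathbb{N}$ such that for every even $n>N_1$ and every rational $p/q$ ($q\in\mathbb{N}$): $$\frac{p}{q}\in I_n,\ q<q_{n+2}\ \Longrightarrow\ \frac{p}{q}+\frac{\gamma}{q^{\tau+1}}<\frac{p_{n+2}}{q_{n+2}}-\frac{\gamma}{q_{n+2}^{\tau+1}}-\frac{2\gamma}{q_{n+2}^{\tau-1}}.$$
   Context: For $x\in\mathbb{R}$, $\|x\|:=\min_{p\in\mathbb{Z}}|x-p|$; $\mathbb{N}=\{1,2,\dots\}$. For $\gamma>0,\tau\ge1$, $D_{\gamma,\tau}:=\{\alpha\in(0,1): \|q\alpha\|\ge\gamma/q^\tau\ \forall q\in\mathbb{N}\}$; its elements are irrational. For irrational $\alpha\in(0,1)$ write $\alpha=\cfrac{1}{a_1+\cfrac{1}{a_2+\cdots}}$, and let $p_n/q_n$ ($n\ge0$) be its convergents: $p_{-1}=1,q_{-1}=0,p_0=0,q_0=1$, $p_n=a_np_{n-1}+p_{n-2}$, $q_n=a_nq_{n-1}+q_{n-2}$. *)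

theory Defs
  imports "HOL-Analysis.Analysis"
begin

definition dist_int :: "real \<Rightarrow> real" where
  "dist_int x = min (x - of_int \<lfloor>x\<rfloor>) (of_int \<lceil>x\<rceil> - x)"

definition Dio :: "real \<Rightarrow> real \<Rightarrow> real set" where
  "Dio \<gamma> \<tau> = {\<alpha>. 0 < \<alpha> \<and> \<alpha> < 1 \<and>
      (\<forall>q::nat. q \<ge> 1 \<longrightarrow> dist_int (real q * \<alpha>) \<ge> \<gamma> / real q powr \<tau>)}"

fun cf_rem :: "real \<Rightarrow> nat \<Rightarrow> real" where
  "cf_rem \<alpha> 0 = \<alpha>"
| "cf_rem \<alpha> (Suc n) = frac (1 / cf_rem \<alpha> n)"

definition cf_a :: "real \<Rightarrow> nat \<Rightarrow> int" where
  "cf_a \<alpha> n = \<lfloor>1 / cf_rem \<alpha> (n - 1)\<rfloor>"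

text \<open>Shifted numerators/denominators: cfP k = p_{k-1}, cfQ k = q_{k-1}.\<close>
fun cfP :: "real \<Rightarrow> nat \<Rightarrow> int" where
  "cfP \<alpha> 0 = 1"
| "cfP \<alpha> (Suc 0) = 0"
| "cfP \<alpha> (Suc (Suc k)) = cf_a \<alpha> (Suc k) * cfP \<alpha> (Suc k) + cfP \<alpha> k"

fun cfQ :: "real \<Rightarrow> nat \<Rightarrow> int" where
  "cfQ \<alpha> 0 = 0"
| "cfQ \<alpha> (Suc 0) = 1"
| "cfQ \<alpha> (Suc (Suc k)) = cf_a \<alpha> (Suc k) * cfQ \<alpha> (Suc k) + cfQ \<alpha> k"

definition conv_p :: "real \<Rightarrow> nat \<Rightarrow> int" where
  "conv_p \<alpha> n = cfP \<alpha> (Suc n)"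

definition conv_q :: "real \<Rightarrow> nat \<Rightarrow> int" where
  "conv_q \<alpha> n = cfQ \<alpha> (Suc n)"

end

theory Submission
  imports Defs
begin

(*
  For even n we have p_n/q_n < p_(n+2)/q_(n+2) < p_(n+1)/q_(n+1), and consecutive
  convergents form unimodular pairs. Expressing a fraction p/q of I_n in these bases gives
  positive integers A, B, C with q = q_(n+1) A + q_n B and q_(n+2) B = q + q_(n+1) C, where
  C = p_(n+2) q - p q_(n+2). Hence q >= q_(n+1) >= n + 1, and the gap
  p_(n+2)/q_(n+2) - p/q = C/(q q_(n+2)) is at least both 1/(q q_(n+2)) and 1/(2 q^2).
  Once q^(tau-3) >= 6 gamma, the error term at q is at most a third of the gap and the two
  at q_(n+2) together are less than half of it.
*)

lemma Dio_not_rational: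
  assumes "\<gamma> > 0" "\<alpha> \<in> Dio \<gamma> \<tau>"
  shows "\<alpha> \<notin> \<rat>"
proof
  assume "\<alpha> \<in> \<rat>"
  then obtain a b :: int where b: "b > 0" and ab: "\<alpha> = of_int a / of_int b"
    by (elim Rats_cases')
  have "nat b \<ge> 1" using b by simp
  then have "\<gamma> / real (nat b) powr \<tau> \<le> dist_int (real (nat b) * \<alpha>)"
    using assms(2) unfolding Dio_def by blast
  moreover have "real (nat b) * \<alpha> = of_int a" using b ab by simp
  moreover have "0 < \<gamma> / real (nat b) powr \<tau>" using b assms(1) by simp
  ultimately show False by (simp add: dist_int_def)
qed

lemma cf_rem_irrational:
  assumes "\<alpha> \<notin> \<rat>" "0 < \<alpha>" "\<alpha> < 1"
  shows "cf_rem \<alpha> k \<notin> \<rat> \<and> 0 < cf_rem \<alpha> k \<and> cf_rem \<alpha> k < 1"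
proof (induction k)
  case 0
  then show ?case using assms by simp
next
  case (Suc k)
  define x where "x = cf_rem \<alpha> k"
  have "frac (1 / x) \<notin> \<rat>"
  proof
    assume "frac (1 / x) \<in> \<rat>"
    then have "1 / (frac (1 / x) + of_int \<lfloor>1 / x\<rfloor>) \<in> \<rat>" by simp
    then show False using Suc.IH by (simp add: frac_def x_def)
  qed
  moreover from this have "frac (1 / x) \<noteq> 0" by (metis Rats_0)
  ultimately show ?case
    using frac_ge_0[of "1 / x"] frac_lt_1[of "1 / x"] by (simp add: x_def)
qed

lemma cf_a_ge_1:
  assumes "\<alpha> \<notin> \<rat>" "0 < \<alpha>" "\<alpha> < 1"
  shows "1 \<le> cf_a \<alpha> k"
proof -
  have "0 < cf_rem \<alpha> (k - 1)" "cf_rem \<alpha> (k - 1) < 1"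
    using cf_rem_irrational[OF assms] by auto
  then have "1 < 1 / cf_rem \<alpha> (k - 1)" by simp
  then show ?thesis unfolding cf_a_def by linarith
qed

lemma conv_q_Suc_Suc:
  "conv_q \<alpha> (Suc (Suc n)) = cf_a \<alpha> (Suc (Suc n)) * conv_q \<alpha> (Suc n) + conv_q \<alpha> n"
  by (simp add: conv_q_def)

lemma conv_q_pos:
  assumes "\<And>k. 1 \<le> cf_a \<alpha> k"
  shows "0 < conv_q \<alpha> n"
proof (induction n rule: induct_nat_012)
  case 1
  show ?case using assms[of 1] by (simp add: conv_q_def)
next
  case (ge2 n)
  then show ?case using assms[of "Suc (Suc n)"] by (simp add: conv_q_Suc_Suc add_pos_pos)
qed (simp add: conv_q_def)

lemma conv_q_ge_index:
  assumes "\<And>k. 1 \<le> cf_a \<alpha> k"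
  shows "int n \<le> conv_q \<alpha> n"
proof (induction n rule: induct_nat_012)
  case 1
  show ?case using assms[of 1] by (simp add: conv_q_def)
next
  case (ge2 n)
  have "conv_q \<alpha> (Suc n) \<le> cf_a \<alpha> (Suc (Suc n)) * conv_q \<alpha> (Suc n)"
    using assms conv_q_pos[OF assms] by simp
  moreover have "1 \<le> conv_q \<alpha> n"
    using conv_q_pos[OF assms] by (simp add: int_one_le_iff_zero_less)
  ultimately show ?case using ge2.IH(2) unfolding conv_q_Suc_Suc by linarith
qed (simp add: conv_q_def)

lemma conv_det:
  "conv_p \<alpha> (Suc n) * conv_q \<alpha> n - conv_p \<alpha> n * conv_q \<alpha> (Suc n) = (-1) ^ n"
proof (induction n)
  case 0
  then show ?case by (simp add: conv_p_def conv_q_def)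
next
  case (Suc n)
  have "conv_p \<alpha> (Suc (Suc n)) * conv_q \<alpha> (Suc n) - conv_p \<alpha> (Suc n) * conv_q \<alpha> (Suc (Suc n))
      = - (conv_p \<alpha> (Suc n) * conv_q \<alpha> n - conv_p \<alpha> n * conv_q \<alpha> (Suc n))"
    by (simp add: conv_p_def conv_q_def algebra_simps)
  then show ?case using Suc.IH by simp
qed

lemma unimodular_between_bounds:
  fixes P0 P1 P2 s r Q p q :: int
  assumes det: "P1 * s - P0 * r = 1" "P2 * r - P1 * Q = -1"
    and "0 \<le> s" "0 \<le> r" "0 < Q" "0 < q"
    and left: "P0 * q < p * s" and right: "p * Q < P2 * q"
  shows "r \<le> q" "Q \<le> 2 * q * (P2 * q - p * Q)"
proof -
  \<comment> \<open>\<open>A, B\<close> and \<open>B, C\<close> are the coordinates of \<open>(q, p)\<close> in the unimodular bases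
    \<open>(r, P1), (s, P0)\<close> and \<open>(Q, P2), (r, P1)\<close>.\<close>
  define A B C where "A = p * s - P0 * q" and "B = P1 * q - p * r" and "C = P2 * q - p * Q"
  have "r * A + s * B = q * (P1 * s - P0 * r)" "Q * B - r * C = - q * (P2 * r - P1 * Q)"
    by (simp_all add: A_def B_def C_def algebra_simps)
  then have q_eq: "q = r * A + s * B" and QB_eq: "Q * B = q + r * C"
    using det by simp_all
  have "0 < A" "0 < C" using left right by (simp_all add: A_def C_def)
  moreover have "0 < B"
    using QB_eq \<open>0 < C\<close> \<open>0 \<le> r\<close> \<open>0 < q\<close> \<open>0 < Q\<close>
    by (smt (verit) zero_less_mult_pos mult_nonneg_nonneg)
  ultimately have "r \<le> r * A" "0 \<le> s * B" "Q \<le> Q * B"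
    using \<open>0 \<le> s\<close> \<open>0 \<le> r\<close> \<open>0 < Q\<close> by (simp_all add: mult_le_cancel_left1)
  then show "r \<le> q" using q_eq by linarith
  then have "q \<le> q * C" "r * C \<le> q * C"
    using \<open>0 < C\<close> \<open>0 < q\<close> by (simp_all add: mult_le_cancel_left1 mult_right_mono)
  then show "Q \<le> 2 * q * (P2 * q - p * Q)"
    using QB_eq \<open>Q \<le> Q * B\<close> unfolding C_def by linarith
qed

lemma between_even_convergents:
  fixes p :: int and q :: nat
  assumes "\<And>k. 1 \<le> cf_a \<alpha> k" "even n" "0 < q"
    and left: "of_int (conv_p \<alpha> n) / of_int (conv_q \<alpha> n) < of_int p / real q"
    and right: "of_int p / real q < of_int (conv_p \<alpha> (n+2)) / of_int (conv_q \<alpha> (n+2))"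
  shows "conv_q \<alpha> (n+1) \<le> int q"
    and "1 / (real q * of_int (conv_q \<alpha> (n+2)))
          \<le> of_int (conv_p \<alpha> (n+2)) / of_int (conv_q \<alpha> (n+2)) - of_int p / real q"
    and "1 / (2 * real q ^ 2)
          \<le> of_int (conv_p \<alpha> (n+2)) / of_int (conv_q \<alpha> (n+2)) - of_int p / real q"
proof -
  define P0 s P1 r P2 Q where "P0 = conv_p \<alpha> n" and "s = conv_q \<alpha> n"
    and "P1 = conv_p \<alpha> (n+1)" and "r = conv_q \<alpha> (n+1)"
    and "P2 = conv_p \<alpha> (n+2)" and "Q = conv_q \<alpha> (n+2)"
  have pos: "0 < s" "0 < r" "0 < Q"
    using conv_q_pos[OF assms(1)] by (simp_all add: s_def r_def Q_def)
  have det: "P1 * s - P0 * r = 1" "P2 * r - P1 * Q = -1"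
    using conv_det[of \<alpha> n] conv_det[of \<alpha> "n+1"] \<open>even n\<close>
    by (simp_all add: P0_def s_def P1_def r_def P2_def Q_def)
  have "real_of_int (P0 * q) < real_of_int (p * s)"
    using left pos \<open>0 < q\<close> by (simp add: P0_def s_def field_simps)
  moreover have "real_of_int (p * Q) < real_of_int (P2 * q)"
    using right pos \<open>0 < q\<close> by (simp add: P2_def Q_def field_simps)
  ultimately have "P0 * q < p * s" "p * Q < P2 * q"
    by (simp_all only: of_int_less_iff)
  moreover have "0 < int q" using \<open>0 < q\<close> by simp
  ultimately have bounds: "r \<le> int q" "Q \<le> 2 * int q * (P2 * int q - p * Q)"
    using unimodular_between_bounds[OF det] pos by simp_all
  define C where "C = P2 * q - p * Q"
  have gap: "of_int P2 / of_int Q - of_int p / real q = of_int C / (real q * of_int Q)"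
    using pos \<open>0 < q\<close> by (simp add: C_def field_simps)
  show "conv_q \<alpha> (n+1) \<le> int q" using bounds(1) \<open>0 < q\<close> by (simp add: r_def)
  have "1 \<le> C" using \<open>p * Q < P2 * q\<close> by (simp add: C_def)
  then show "1 / (real q * of_int (conv_q \<alpha> (n+2)))
          \<le> of_int (conv_p \<alpha> (n+2)) / of_int (conv_q \<alpha> (n+2)) - of_int p / real q"
    using pos \<open>0 < q\<close> unfolding gap[unfolded P2_def Q_def]
    by (intro divide_right_mono) (simp_all add: Q_def)
  have "real_of_int Q \<le> of_int (2 * int q * C)"
    using bounds(2) unfolding C_def by (simp only: of_int_le_iff)
  then have "real_of_int Q \<le> 2 * real q * of_int C" by simp
  then show "1 / (2 * real q ^ 2)
          \<le> of_int (conv_p \<alpha> (n+2)) / of_int (conv_q \<alpha> (n+2)) - of_int p / real q"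
    using pos \<open>0 < q\<close> unfolding gap[unfolded P2_def Q_def]
    by (simp add: Q_def field_simps power2_eq_square)
qed

lemma divide_powr_le_inverse_square:
  fixes z \<gamma> \<tau> c :: real
  assumes "0 < z" "0 < \<gamma>" "0 < c" "c * \<gamma> \<le> z powr (\<tau> - 3)"
  shows "\<gamma> / z powr (\<tau> - 1) \<le> 1 / (c * z\<^sup>2)"
proof -
  have "z powr (\<tau> - 1) = z powr (\<tau> - 3) * z\<^sup>2"
    using powr_add[of z "\<tau> - 3" 2] \<open>0 < z\<close> by simp
  also have "\<dots> \<ge> (c * \<gamma>) * z\<^sup>2"
    using assms by (simp add: mult_right_mono)
  finally have "\<gamma> / z powr (\<tau> - 1) \<le> \<gamma> / ((c * \<gamma>) * z\<^sup>2)"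
    using assms by (intro divide_left_mono) simp_all
  then show ?thesis using \<open>0 < \<gamma>\<close> by simp
qed

lemma error_terms_less_gap:
  fixes x y \<gamma> \<tau> D :: real
  assumes "0 < \<gamma>" "3 < \<tau>" "1 \<le> x" "x < y" "6 * \<gamma> \<le> x powr (\<tau> - 3)"
    and D: "1 / (2 * x\<^sup>2) \<le> D" "1 / (x * y) \<le> D"
  shows "\<gamma> / x powr (\<tau> + 1) + \<gamma> / y powr (\<tau> + 1) + 2 * \<gamma> / y powr (\<tau> - 1) < D"
proof -
  have "6 * \<gamma> \<le> y powr (\<tau> - 3)"
    using assms(2-5) powr_mono2[of "\<tau> - 3" x y] by linarith
  then have y_bound: "\<gamma> / y powr (\<tau> - 1) \<le> 1 / (6 * y\<^sup>2)"
    using assms by (intro divide_powr_le_inverse_square) simp_all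
  have x_bound: "\<gamma> / x powr (\<tau> - 1) \<le> 1 / (6 * x\<^sup>2)"
    using assms by (intro divide_powr_le_inverse_square) simp_all
  have tail: "\<gamma> / z powr (\<tau> + 1) \<le> \<gamma> / z powr (\<tau> - 1)" if "1 \<le> z" for z :: real
    using that \<open>0 < \<gamma>\<close> by (intro divide_left_mono powr_mono) simp_all
  have "1 \<le> y" using assms(3,4) by linarith
  note tails = tail[OF \<open>1 \<le> x\<close>] tail[OF \<open>1 \<le> y\<close>]
  have "1 / y\<^sup>2 < 1 / (x * y)"
    using assms(3,4) by (intro divide_strict_left_mono) (simp_all add: power2_eq_square)
  moreover have "1 / (6 * x\<^sup>2) = (1 / (2 * x\<^sup>2)) / 3" "1 / (6 * y\<^sup>2) = (1 / y\<^sup>2) / 6"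
    "2 * \<gamma> / y powr (\<tau> - 1) = 2 * (\<gamma> / y powr (\<tau> - 1))"
    by simp_all
  moreover have "0 < 1 / y\<^sup>2" using assms(3,4) by simp
  ultimately show ?thesis
    using x_bound y_bound tails D assms(3,4) by linarith
qed

lemma even_convergent_gap_estimate:
  fixes p :: int and q :: nat and \<gamma> \<tau> :: real
  assumes "0 < \<gamma>" "3 < \<tau>" "\<And>k. 1 \<le> cf_a \<alpha> k" "even n" "0 < q"
    and in_I: "of_int (conv_p \<alpha> n) / of_int (conv_q \<alpha> n) < of_int p / real q"
      "of_int p / real q < of_int (conv_p \<alpha> (n+2)) / of_int (conv_q \<alpha> (n+2))"
    and "int q < conv_q \<alpha> (n+2)" and "6 * \<gamma> \<le> real n powr (\<tau> - 3)"
  shows "of_int p / real q + \<gamma> / real q powr (\<tau> + 1)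
    < of_int (conv_p \<alpha> (n+2)) / of_int (conv_q \<alpha> (n+2))
      - \<gamma> / real_of_int (conv_q \<alpha> (n+2)) powr (\<tau> + 1)
      - 2 * \<gamma> / real_of_int (conv_q \<alpha> (n+2)) powr (\<tau> - 1)"
proof -
  note gaps = between_even_convergents[OF assms(3-5) in_I]
  have "int n < int q"
    using conv_q_ge_index[OF assms(3), of "n+1"] gaps(1) by linarith
  then have "6 * \<gamma> \<le> real q powr (\<tau> - 3)"
    using \<open>6 * \<gamma> \<le> real n powr (\<tau> - 3)\<close> powr_mono2[of "\<tau> - 3" "real n" "real q"] \<open>3 < \<tau>\<close>
    by simp
  moreover have "1 \<le> real q" "real q < of_int (conv_q \<alpha> (n+2))"
    using \<open>0 < q\<close> \<open>int q < conv_q \<alpha> (n+2)\<close> by simp_all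
  ultimately show ?thesis
    using error_terms_less_gap[OF assms(1,2) _ _ _ gaps(3,2)] by linarith
qed

lemma le_powr_of_root_le:
  fixes c e x :: real
  assumes "0 < e" "0 \<le> c" "c powr (1 / e) \<le> x"
  shows "c \<le> x powr e"
proof -
  have "(c powr (1 / e)) powr e \<le> x powr e"
    using assms by (intro powr_mono2) simp_all
  then show ?thesis using assms by (simp add: powr_powr)
qed

theorem lemma2:
  fixes \<gamma> \<tau> \<alpha> :: real
  assumes "\<gamma> > 0" and "\<tau> > 3" and "\<alpha> \<in> Dio \<gamma> \<tau>"
  shows "\<exists>N1::nat. N1 \<ge> 1 \<and> (\<forall>n::nat. \<forall>p::int. \<forall>q::nat.
     even n \<and> n > N1 \<and> q \<ge> 1 \<and>
     of_int (conv_p \<alpha> n) / of_int (conv_q \<alpha> n) < of_int p / real q \<and>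
     of_int p / real q < of_int (conv_p \<alpha> (n+2)) / of_int (conv_q \<alpha> (n+2)) \<and>
     int q < conv_q \<alpha> (n+2)
     \<longrightarrow> of_int p / real q + \<gamma> / real q powr (\<tau> + 1)
         < of_int (conv_p \<alpha> (n+2)) / of_int (conv_q \<alpha> (n+2))
           - \<gamma> / real_of_int (conv_q \<alpha> (n+2)) powr (\<tau> + 1)
           - 2 * \<gamma> / real_of_int (conv_q \<alpha> (n+2)) powr (\<tau> - 1))"
proof -
  have "0 < \<alpha>" "\<alpha> < 1" "\<alpha> \<notin> \<rat>"
    using assms Dio_not_rational by (auto simp: Dio_def)
  note cf_a_pos = cf_a_ge_1[OF \<open>\<alpha> \<notin> \<rat>\<close> \<open>0 < \<alpha>\<close> \<open>\<alpha> < 1\<close>]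
  define N1 where "N1 = nat \<lceil>(6 * \<gamma>) powr (1 / (\<tau> - 3))\<rceil> + 1"
  have "6 * \<gamma> \<le> real n powr (\<tau> - 3)" if "N1 < n" for n
  proof (rule le_powr_of_root_le)
    show "(6 * \<gamma>) powr (1 / (\<tau> - 3)) \<le> real n"
      using that real_nat_ceiling_ge[of "(6 * \<gamma>) powr (1 / (\<tau> - 3))"] unfolding N1_def by linarith
  qed (use assms in simp_all)
  then show ?thesis
    using even_convergent_gap_estimate[OF assms(1,2) cf_a_pos]
    by (intro exI[of _ N1]) (auto simp: N1_def)
qed

end
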